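(* There is a constant $c_1>0$ such that for all $n>5$, $$h_3(n,\{(4,0),(4,2)\}) > c_1\, n^{1/5}.$$ That is, every $n$-vertex $3$-graph in which every four vertices span $1$, $3$ or $4$ edges has a clique or coclique of size greater than $c_1 n^{1/5}$.
   Context: For an $r$-uniform hypergraph ($r$-graph) $H$, a homogeneous set is a set of vertices that is either a clique (every $r$-subset is an edge) or a coclique (no $r$-subset is an edge); $h(H)$ denotes the size of a largest homogeneous set. An $(m,f)$-graph is an $r$-graph with $m$ vertices and $f$ edges; $H$ is $(m,f)$-free if it contains no induced sub-hypergraph that is an $(m,f)$-graph. For a set $Q$ of pairs $(m,f)$, $H$ is $Q$-free if it is $(m,f)$-free for every $(m,f)\in Q$. $h_r(n,Q)$ is the minimum of $h(H)$ over all $n$-vertex $Q$-free $r$-graphs $H$. *)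

theory Defs
  imports Complex_Main
begin

definition r_graph :: "nat \<Rightarrow> 'a set \<Rightarrow> 'a set set \<Rightarrow> bool" where
  "r_graph r V E \<longleftrightarrow> finite V \<and> (\<forall>e\<in>E. e \<subseteq> V \<and> card e = r)"

definition homogeneous :: "nat \<Rightarrow> 'a set \<Rightarrow> 'a set set \<Rightarrow> 'a set \<Rightarrow> bool" where
  "homogeneous r V E S \<longleftrightarrow> S \<subseteq> V \<and>
     ((\<forall>T. T \<subseteq> S \<and> card T = r \<longrightarrow> T \<in> E) \<or> (\<forall>T. T \<subseteq> S \<and> card T = r \<longrightarrow> T \<notin> E))"

definition hom_num :: "nat \<Rightarrow> 'a set \<Rightarrow> 'a set set \<Rightarrow> nat" where
  "hom_num r V E = Max {card S | S. homogeneous r V E S}"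

definition has_induced :: "'a set \<Rightarrow> 'a set set \<Rightarrow> nat \<times> nat \<Rightarrow> bool" where
  "has_induced V E mf \<longleftrightarrow>
     (\<exists>S. S \<subseteq> V \<and> card S = fst mf \<and> card {e\<in>E. e \<subseteq> S} = snd mf)"

definition Q_free :: "'a set \<Rightarrow> 'a set set \<Rightarrow> (nat \<times> nat) set \<Rightarrow> bool" where
  "Q_free V E Q \<longleftrightarrow> (\<forall>mf\<in>Q. \<not> has_induced V E mf)"

text \<open>h_r(n,Q): minimum of h(H) over n-vertex Q-free r-graphs (vertex set {0..<n}, WLOG).\<close>
definition h_rnQ :: "nat \<Rightarrow> nat \<Rightarrow> (nat \<times> nat) set \<Rightarrow> nat" where
  "h_rnQ r n Q = Min {hom_num r {0..<n} E | E. r_graph r {0..<n} E \<and> Q_free {0..<n} E Q}"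

end

theory Submission
  imports Defs
begin

text \<open>
  Let \<open>S\<close> be a largest clique of a \<open>{(4,0),(4,2)}\<close>-free 3-graph on \<open>V\<close> and \<open>h\<close> its homogeneous
  number. By maximality, every vertex outside \<open>S\<close> forms a non-edge with some pair \<open>y, z\<close> of \<open>S\<close>.
  Inside the set \<open>N\<close> of all such vertices for a fixed pair, the 4-sets \<open>{y,z,l,l'}\<close> force the
  links of \<open>y\<close> and \<open>z\<close> to be complementary, and the 4-sets \<open>{y,a,b,c}\<close>, \<open>{z,a,b,c}\<close> force
  each of these links to be complete or empty. The vertex with the empty link turns \<open>N\<close> into a
  clique, to which the other vertex can be added; hence \<open>|N| < h\<close>, and counting over the pairs
  of \<open>S\<close> gives \<open>|V| \<le> h + h\<^sup>3\<close>; so \<open>h\<close> in fact grows at least like \<open>n powr (1/3)\<close>.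
\<close>

lemma card_filter_four:
  assumes "distinct [t1,t2,t3,t4]"
  shows "card {x\<in>{t1,t2,t3,t4}. P x} = of_bool (P t1) + of_bool (P t2) + of_bool (P t3) + of_bool (P t4)"
proof -
  have "card {x\<in>{t1,t2,t3,t4}. P x} = (\<Sum>x\<in>{t1,t2,t3,t4}. if P x then 1 else 0)"
    unfolding card_eq_sum by (rule sum.inter_filter) simp
  also have "\<dots> = of_bool (P t1) + of_bool (P t2) + of_bool (P t3) + of_bool (P t4)"
    using assms by (simp add: add.assoc)
  finally show ?thesis .
qed

lemma three_subsets_of_four:
  assumes "distinct [a,b,c,d]" "e \<subseteq> {a,b,c,d}" "card e = 3"
  shows "e \<in> {{a,b,c},{a,b,d},{a,c,d},{b,c,d}}"
proof -
  have "card ({a,b,c,d} - e) = 1"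
    using assms by (simp add: card_Diff_subset finite_subset)
  then obtain w where w: "{a,b,c,d} - e = {w}" by (rule card_1_singletonE)
  then have e: "e = {a,b,c,d} - {w}" using assms(2) by blast
  have "{a,b,c,d} - {a} = {b,c,d}" "{a,b,c,d} - {b} = {a,c,d}"
    "{a,b,c,d} - {c} = {a,b,d}" "{a,b,c,d} - {d} = {a,b,c}"
    using assms(1) by auto
  moreover have "w \<in> {a,b,c,d}" using w by blast
  ultimately show ?thesis unfolding e by (elim insertE emptyE) simp_all
qed

lemma card_edges_in_four_set:
  assumes "\<forall>e\<in>E. card e = 3" "distinct [a,b,c,d]"
  shows "card {e\<in>E. e \<subseteq> {a,b,c,d}} =
    of_bool ({a,b,c}\<in>E) + of_bool ({a,b,d}\<in>E) + of_bool ({a,c,d}\<in>E) + of_bool ({b,c,d}\<in>E)"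
proof -
  have eq: "{e\<in>E. e \<subseteq> {a,b,c,d}} = {T \<in> {{a,b,c},{a,b,d},{a,c,d},{b,c,d}}. T \<in> E}"
    using three_subsets_of_four[OF assms(2)] assms(1) by auto
  have "distinct [{a,b,c},{a,b,d},{a,c,d},{b,c,d}]"
    using assms(2) by (auto simp: insert_eq_iff doubleton_eq_iff)
  then show ?thesis unfolding eq by (rule card_filter_four)
qed

lemma empty_or_complete_if_nonadjacency_spreads:
  assumes sym: "\<And>a b. R a b \<Longrightarrow> R b a"
    and spread: "\<And>a b c. a \<in> N \<Longrightarrow> b \<in> N \<Longrightarrow> c \<in> N \<Longrightarrow> distinct [a,b,c] \<Longrightarrow> \<not> R a b \<Longrightarrow> \<not> R a c"
  shows "(\<forall>a\<in>N. \<forall>b\<in>N. a \<noteq> b \<longrightarrow> \<not> R a b) \<or> (\<forall>a\<in>N. \<forall>b\<in>N. a \<noteq> b \<longrightarrow> R a b)"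
proof (rule disjCI)
  assume "\<not> (\<forall>a\<in>N. \<forall>b\<in>N. a \<noteq> b \<longrightarrow> R a b)"
  then obtain l1 l2 where l: "l1 \<in> N" "l2 \<in> N" "l1 \<noteq> l2" "\<not> R l1 l2" by blast
  have isolated: "\<not> R l1 c" if "c \<in> N" "c \<noteq> l1" for c
  proof (cases "c = l2")
    case False
    then show ?thesis using spread[of l1 l2 c] l that by simp
  qed (use l in simp)
  have "\<not> R a b" if a: "a \<in> N" and b: "b \<in> N" and "a \<noteq> b" for a b
  proof (cases "a = l1")
    case False
    then have "\<not> R a l1" using isolated[OF a] sym by blast
    then show ?thesis
      using spread[of a l1 b] isolated[OF b] sym a b l(1) \<open>a \<noteq> b\<close> False
      by (cases "b = l1") auto
  qed (use isolated b \<open>a \<noteq> b\<close> in auto)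
  then show "\<forall>a\<in>N. \<forall>b\<in>N. a \<noteq> b \<longrightarrow> \<not> R a b" by blast
qed

definition clique :: "nat \<Rightarrow> 'a set \<Rightarrow> 'a set set \<Rightarrow> 'a set \<Rightarrow> bool" where
  "clique r V E S \<longleftrightarrow> S \<subseteq> V \<and> (\<forall>T. T \<subseteq> S \<and> card T = r \<longrightarrow> T \<in> E)"

lemma homogeneous_if_clique: "clique r V E S \<Longrightarrow> homogeneous r V E S"
  unfolding clique_def homogeneous_def by blast

lemma card_le_hom_num:
  assumes "finite V" "homogeneous r V E S"
  shows "card S \<le> hom_num r V E"
proof -
  have "{card S |S. homogeneous r V E S} \<subseteq> card ` Pow V"
    unfolding homogeneous_def by auto
  then have "finite {card S |S. homogeneous r V E S}"
    using assms(1) finite_subset by blast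
  then show ?thesis unfolding hom_num_def using assms(2) by (intro Max_ge) auto
qed

lemma ex_maximum_clique:
  assumes "finite V" "0 < r"
  obtains S where "clique r V E S" "\<And>S'. clique r V E S' \<Longrightarrow> card S' \<le> card S"
proof -
  have "clique r V E {}" unfolding clique_def using assms(2) by auto
  moreover have "\<forall>S'. clique r V E S' \<longrightarrow> card S' < Suc (card V)"
  proof (intro allI impI)
    fix S' assume "clique r V E S'"
    then have "S' \<subseteq> V" unfolding clique_def by blast
    then show "card S' < Suc (card V)" using card_mono[OF assms(1)] by (simp add: less_Suc_eq_le)
  qed
  ultimately obtain S where "clique r V E S" "\<forall>S'. clique r V E S' \<longrightarrow> card S' \<le> card S"
    using ex_has_greatest_nat[of "clique r V E" "{}" card "Suc (card V)"] by blast
  then show ?thesis using that by blast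
qed

lemma Q_free_complete:
  assumes "finite V" "\<forall>(m,f)\<in>Q. m choose r \<noteq> f"
  shows "Q_free V {T. T \<subseteq> V \<and> card T = r} Q"
  unfolding Q_free_def has_induced_def
proof (clarify)
  fix m f S
  assume "(m, f) \<in> Q" "S \<subseteq> V" "card S = fst (m, f)"
    "card {e \<in> {T. T \<subseteq> V \<and> card T = r}. e \<subseteq> S} = snd (m, f)"
  moreover have "{e \<in> {T. T \<subseteq> V \<and> card T = r}. e \<subseteq> S} = {T. T \<subseteq> S \<and> card T = r}"
    using \<open>S \<subseteq> V\<close> by auto
  moreover have "finite S" using \<open>S \<subseteq> V\<close> assms(1) finite_subset by blast
  ultimately show False using assms(2) by (auto simp: n_subsets)
qed

lemma h_rnQ_attained:
  assumes "r_graph r {0..<n} E0" "Q_free {0..<n} E0 Q"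
  obtains E where "r_graph r {0..<n} E" "Q_free {0..<n} E Q" "h_rnQ r n Q = hom_num r {0..<n} E"
proof -
  define A where "A = {hom_num r {0..<n} E | E. r_graph r {0..<n} E \<and> Q_free {0..<n} E Q}"
  have "A \<subseteq> hom_num r {0..<n} ` Pow (Pow {0..<n})"
    unfolding A_def r_graph_def by auto
  then have "finite A" by (rule finite_subset) simp
  moreover have "A \<noteq> {}" unfolding A_def using assms by blast
  ultimately have "Min A \<in> A" by simp
  then show ?thesis using that unfolding A_def h_rnQ_def by auto
qed

lemma powr_fifth_less_if_le_cube:
  fixes n h :: nat
  assumes "n \<le> h + h^3" "0 < n"
  shows "real n powr (1/5) < 2 * real h"
proof -
  have "h \<ge> 1" using assms by (cases h) auto
  then have "h^1 \<le> h^5" "h^3 \<le> h^5" "h^5 > 0" by (simp_all only: power_increasing) simp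
  moreover have "(2*h)^5 = 32 * h^5" by (simp add: power_mult_distrib)
  ultimately have "n < (2*h)^5" using assms(1) by simp
  have "real n powr (1/5) = root 5 (real n)" by (simp add: root_powr_inverse)
  also have "\<dots> < root 5 (real ((2*h)^5))"
    using \<open>n < (2*h)^5\<close> by (simp only: real_root_less_iff of_nat_less_iff)
  also have "\<dots> = 2 * real h" using real_root_pos2[of 5 "2 * real h"] by simp
  finally show ?thesis .
qed

lemma clique_insert_if_complete_link:
  assumes "clique 3 V E N" "w \<in> V"
    and link: "\<And>l l'. l \<in> N \<Longrightarrow> l' \<in> N \<Longrightarrow> l \<noteq> l' \<Longrightarrow> {w,l,l'} \<in> E"
  shows "clique 3 V E (insert w N)"
  unfolding clique_def
proof (intro conjI allI impI)
  show "insert w N \<subseteq> V" using assms(1,2) unfolding clique_def by blast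
  fix T assume T: "T \<subseteq> insert w N \<and> card T = 3"
  show "T \<in> E"
  proof (cases "w \<in> T")
    case True
    then obtain l l' where "T = {w,l,l'}" "l \<noteq> l'" "l \<noteq> w" "l' \<noteq> w"
      using T by (auto simp: card_3_iff)
    then show ?thesis using link T by auto
  next
    case False
    then show ?thesis using assms(1) T unfolding clique_def by blast
  qed
qed

lemma nonedge_with_pair_if_maximal_clique:
  assumes "clique 3 V E S" "x \<in> V" "x \<notin> S" "\<not> clique 3 V E (insert x S)"
  shows "\<exists>y\<in>S. \<exists>z\<in>S. y \<noteq> z \<and> {x,y,z} \<notin> E"
proof -
  obtain T where T: "T \<subseteq> insert x S" "card T = 3" "T \<notin> E"
    using assms unfolding clique_def by auto
  have "x \<in> T" using assms(1) T unfolding clique_def by blast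
  then obtain y z where "T = {x,y,z}" "y \<noteq> z" "x \<noteq> y" "x \<noteq> z"
    using T(2) by (auto simp: card_3_iff)
  then show ?thesis using T by auto
qed

definition pair_nonlink :: "'a set \<Rightarrow> 'a set set \<Rightarrow> 'a \<Rightarrow> 'a \<Rightarrow> 'a set" where
  "pair_nonlink V E y z = {x\<in>V. x \<noteq> y \<and> x \<noteq> z \<and> {x,y,z} \<notin> E}"

locale free_40_42 =
  fixes V :: "'a set" and E :: "'a set set"
  assumes r_graph: "r_graph 3 V E"
    and free: "Q_free V E {(4,0),(4,2)}"
begin

lemma finite_V: "finite V"
  using r_graph unfolding r_graph_def by blast

lemma four_set_edge_count:
  assumes "{a,b,c,d} \<subseteq> V" "distinct [a,b,c,d]"
  defines "k \<equiv> of_bool ({a,b,c}\<in>E) + of_bool ({a,b,d}\<in>E) + of_bool ({a,c,d}\<in>E) + of_bool ({b,c,d}\<in>E)"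
  shows "k \<noteq> (0::nat) \<and> k \<noteq> 2"
proof -
  have "\<forall>e\<in>E. card e = 3" using r_graph unfolding r_graph_def by blast
  then have k: "card {e\<in>E. e \<subseteq> {a,b,c,d}} = k"
    unfolding k_def using assms(2) by (rule card_edges_in_four_set)
  have "card {a,b,c,d} = 4" using assms(2) by simp
  then have "has_induced V E (4, card {e\<in>E. e \<subseteq> {a,b,c,d}})"
    unfolding has_induced_def using assms(1) by (intro exI[of _ "{a,b,c,d}"]) simp
  then have "(4, k) \<notin> {(4,0),(4,2)}"
    using free k unfolding Q_free_def by blast
  then show ?thesis by simp
qed

context
  fixes y z :: 'a
  assumes y: "y \<in> V" and z: "z \<in> V" and yz: "y \<noteq> z"
begin

private abbreviation (input) N where "N \<equiv> pair_nonlink V E y z"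

lemma pair_nonlinkD:
  assumes "l \<in> N"
  shows "l \<in> V" "l \<noteq> y" "l \<noteq> z" "{y,z,l} \<notin> E"
  using assms unfolding pair_nonlink_def by (auto simp: insert_commute)

lemma links_complementary_on_pair_nonlink:
  assumes l: "l \<in> N" and l': "l' \<in> N" and "l \<noteq> l'"
  shows "{y,l,l'} \<in> E \<longleftrightarrow> {z,l,l'} \<notin> E"
proof -
  have "{y,z,l,l'} \<subseteq> V" "distinct [y,z,l,l']"
    using pair_nonlinkD[OF l] pair_nonlinkD[OF l'] assms(3) y z yz by auto
  from four_set_edge_count[OF this] pair_nonlinkD(4)[OF l] pair_nonlinkD(4)[OF l']
  show ?thesis by auto
qed

lemma clique_pair_nonlink_if_empty_link:
  assumes u: "u \<in> {y,z}" and empty: "\<And>l l'. l \<in> N \<Longrightarrow> l' \<in> N \<Longrightarrow> l \<noteq> l' \<Longrightarrow> {u,l,l'} \<notin> E"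
  shows "clique 3 V E N"
  unfolding clique_def
proof (intro conjI allI impI)
  show "N \<subseteq> V" using pair_nonlinkD by blast
  fix T assume T: "T \<subseteq> N \<and> card T = 3"
  then obtain p q r where pqr: "T = {p,q,r}" "p \<noteq> q" "q \<noteq> r" "p \<noteq> r"
    by (auto simp: card_3_iff)
  then have p: "p \<in> N" and q: "q \<in> N" and r: "r \<in> N" using T by auto
  have "{u,p,q,r} \<subseteq> V" "distinct [u,p,q,r]"
    using pair_nonlinkD[OF p] pair_nonlinkD[OF q] pair_nonlinkD[OF r] pqr u y z by auto
  from four_set_edge_count[OF this] empty[OF p q] empty[OF p r] empty[OF q r] pqr
  show "T \<in> E" by auto
qed

lemma nonadjacency_spreads_in_link:
  assumes a: "a \<in> N" and b: "b \<in> N" and c: "c \<in> N" and "distinct [a,b,c]" and yab: "{y,a,b} \<notin> E"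
  shows "{y,a,c} \<notin> E"
proof
  assume yac: "{y,a,c} \<in> E"
  have "{z,a,b} \<in> E" "{z,a,c} \<notin> E" "{y,b,c} \<in> E \<longleftrightarrow> {z,b,c} \<notin> E"
    using links_complementary_on_pair_nonlink assms yac by auto
  moreover have "{y,a,b,c} \<subseteq> V" "distinct [y,a,b,c]" "{z,a,b,c} \<subseteq> V" "distinct [z,a,b,c]"
    using pair_nonlinkD[OF a] pair_nonlinkD[OF b] pair_nonlinkD[OF c] assms(4) y z by auto
  ultimately show False
    using four_set_edge_count[of y a b c] four_set_edge_count[of z a b c] yab yac by auto
qed

lemma clique_insert_pair_nonlink:
  "clique 3 V E (insert y N) \<or> clique 3 V E (insert z N)"
proof -
  have "(\<forall>a\<in>N. \<forall>b\<in>N. a \<noteq> b \<longrightarrow> {y,a,b} \<notin> E) \<or> (\<forall>a\<in>N. \<forall>b\<in>N. a \<noteq> b \<longrightarrow> {y,a,b} \<in> E)"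
    using nonadjacency_spreads_in_link
    by (intro empty_or_complete_if_nonadjacency_spreads) (auto simp: insert_commute)
  then show ?thesis
  proof
    assume empty: "\<forall>a\<in>N. \<forall>b\<in>N. a \<noteq> b \<longrightarrow> {y,a,b} \<notin> E"
    then have "clique 3 V E N"
      by (intro clique_pair_nonlink_if_empty_link[of y]) auto
    then show ?thesis
      using empty links_complementary_on_pair_nonlink z by (auto intro: clique_insert_if_complete_link)
  next
    assume complete: "\<forall>a\<in>N. \<forall>b\<in>N. a \<noteq> b \<longrightarrow> {y,a,b} \<in> E"
    then have "clique 3 V E N"
      using links_complementary_on_pair_nonlink by (intro clique_pair_nonlink_if_empty_link[of z]) auto
    then show ?thesis using complete y by (auto intro: clique_insert_if_complete_link)
  qed
qed

lemma card_pair_nonlink_less_hom_num: "card N < hom_num 3 V E"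
proof -
  have "finite N" using finite_V unfolding pair_nonlink_def by simp
  moreover have "y \<notin> N" "z \<notin> N" using pair_nonlinkD by blast+
  ultimately have "card (insert y N) = Suc (card N)" "card (insert z N) = Suc (card N)"
    by simp_all
  then show ?thesis
    using clique_insert_pair_nonlink card_le_hom_num[OF finite_V homogeneous_if_clique] by fastforce
qed

end

lemma card_le_hom_num_cubed: "card V \<le> hom_num 3 V E + hom_num 3 V E ^ 3"
proof -
  define h where "h = hom_num 3 V E"
  obtain S where S: "clique 3 V E S" and S_max: "\<And>S'. clique 3 V E S' \<Longrightarrow> card S' \<le> card S"
    using ex_maximum_clique[OF finite_V, of 3 E] by auto
  have SV: "S \<subseteq> V" using S unfolding clique_def by blast
  then have "finite S" using finite_V finite_subset by blast
  have card_S: "card S \<le> h"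
    unfolding h_def using card_le_hom_num[OF finite_V homogeneous_if_clique[OF S]] .
  define pairs where "pairs = {(y,z) \<in> S \<times> S. y \<noteq> z}"
  have "pairs \<subseteq> S \<times> S" unfolding pairs_def by auto
  then have "finite pairs" using \<open>finite S\<close> finite_subset by blast
  have cover: "V - S \<subseteq> (\<Union>(y,z)\<in>pairs. pair_nonlink V E y z)"
  proof
    fix x assume x: "x \<in> V - S"
    then have "\<not> clique 3 V E (insert x S)"
      using S_max[of "insert x S"] \<open>finite S\<close> by auto
    then obtain y z where "y \<in> S" "z \<in> S" "y \<noteq> z" "{x,y,z} \<notin> E"
      using nonedge_with_pair_if_maximal_clique[OF S] x by blast
    then show "x \<in> (\<Union>(y,z)\<in>pairs. pair_nonlink V E y z)"
      using x unfolding pairs_def pair_nonlink_def by blast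
  qed
  have "card (V - S) \<le> card (\<Union>(y,z)\<in>pairs. pair_nonlink V E y z)"
    using cover finite_V \<open>finite pairs\<close> by (intro card_mono) (auto simp: pair_nonlink_def)
  also have "\<dots> \<le> (\<Sum>(y,z)\<in>pairs. card (pair_nonlink V E y z))"
    by (rule card_UN_le[OF \<open>finite pairs\<close>, of "case_prod (pair_nonlink V E)", simplified prod.case_distrib])
  also have "\<dots> \<le> card pairs * h"
    using sum_bounded_above[of pairs "\<lambda>(y,z). card (pair_nonlink V E y z)" h]
      card_pair_nonlink_less_hom_num SV
    unfolding h_def pairs_def by fastforce
  also have "\<dots> \<le> card (S \<times> S) * h"
    using \<open>pairs \<subseteq> S \<times> S\<close> \<open>finite S\<close> by (intro mult_right_mono card_mono) auto
  also have "\<dots> \<le> h^3"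
    using card_S by (simp add: card_cartesian_product power3_eq_cube mult_mono)
  finally have "card (V - S) \<le> h^3" .
  moreover have "card V = card S + card (V - S)"
    using SV finite_V by (simp add: card_Diff_subset \<open>finite S\<close> card_mono)
  ultimately show ?thesis using card_S unfolding h_def by linarith
qed

end

theorem mainTheorem4:
  shows "\<exists>c1::real. c1 > 0 \<and>
    (\<forall>n::nat. n > 5 \<longrightarrow> real (h_rnQ 3 n {(4,0),(4,2)}) > c1 * real n powr (1/5))"
proof (intro exI[of _ "1/2"] conjI allI impI)
  fix n :: nat assume "n > 5"
  define K where "K = {T. T \<subseteq> {0..<n} \<and> card T = 3}"
  have "r_graph 3 {0..<n} K" unfolding r_graph_def K_def by auto
  moreover have "Q_free {0..<n} K {(4,0),(4,2)}"
    unfolding K_def by (rule Q_free_complete) (auto simp: numeral_eq_Suc)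
  ultimately obtain E where E: "r_graph 3 {0..<n} E" "Q_free {0..<n} E {(4,0),(4,2)}"
    and h: "h_rnQ 3 n {(4,0),(4,2)} = hom_num 3 {0..<n} E"
    by (rule h_rnQ_attained)
  have "n \<le> hom_num 3 {0..<n} E + hom_num 3 {0..<n} E ^ 3"
    using free_40_42.card_le_hom_num_cubed[OF free_40_42.intro[OF E]] by simp
  then have "real n powr (1/5) < 2 * real (hom_num 3 {0..<n} E)"
    using \<open>n > 5\<close> by (intro powr_fifth_less_if_le_cube) auto
  then show "1/2 * real n powr (1/5) < real (h_rnQ 3 n {(4,0),(4,2)})"
    unfolding h by simp
qed (simp)

end
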